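(* Let $q$ be an odd prime power, let $d \geq 1$ and $n \geq 2$ be integers, and let $M_n(\mathbb{F}_q)$ denote the set of $n \times n$ matrices with entries in the finite field $\mathbb{F}_q$. Let $\mathcal{A}_1,\dots,\mathcal{A}_d,\mathcal{B}_1,\dots,\mathcal{B}_d,\mathcal{E},\mathcal{F} \subset M_n(\mathbb{F}_q)$, and let $N$ be the number of tuples $(A_1,\dots,A_d,B_1,\dots,B_d,E,F)$ with $A_i \in \mathcal{A}_i$, $B_i \in \mathcal{B}_i$ ($1 \le i \le d$), $E \in \mathcal{E}$, $F \in \mathcal{F}$ satisfying \[ A_1B_1 + A_2B_2 + \dots + A_dB_d = E + F. \] Then \[ \left| N - \frac{|\mathcal{E}||\mathcal{F}|\prod_{i=1}^d |\mathcal{A}_i||\mathcal{B}_i|}{q^{n^2}} \right| \ll q^{dn^2 - (d-1)n/2 - 1/2} \sqrt{|\mathcal{E}||\mathcal{F}|\prod_{i=1}^d|\mathcal{A}_i||\mathcal{B}_i|}. \]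
   Context: The notation $X \ll Y$ means $X \le C\,Y$ for some positive constant $C$ depending only on $d$ and $n$ (not on $q$ or on the sets). *)

theory Defs
  imports "HOL-Algebra.Algebra" "HOL-Library.FuncSet"
begin

type_synonym 'a mat = "nat \<Rightarrow> nat \<Rightarrow> 'a"

definition mat_set :: "('a, 'm) ring_scheme \<Rightarrow> nat \<Rightarrow> 'a mat set" where
  "mat_set R n = {0..<n} \<rightarrow>\<^sub>E ({0..<n} \<rightarrow>\<^sub>E carrier R)"

definition mat_zero :: "('a, 'm) ring_scheme \<Rightarrow> nat \<Rightarrow> 'a mat" where
  "mat_zero R n = (\<lambda>i\<in>{0..<n}. \<lambda>j\<in>{0..<n}. \<zero>\<^bsub>R\<^esub>)"

definition mat_add :: "('a, 'm) ring_scheme \<Rightarrow> nat \<Rightarrow> 'a mat \<Rightarrow> 'a mat \<Rightarrow> 'a mat" where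
  "mat_add R n A B = (\<lambda>i\<in>{0..<n}. \<lambda>j\<in>{0..<n}. A i j \<oplus>\<^bsub>R\<^esub> B i j)"

definition mat_mult :: "('a, 'm) ring_scheme \<Rightarrow> nat \<Rightarrow> 'a mat \<Rightarrow> 'a mat \<Rightarrow> 'a mat" where
  "mat_mult R n A B = (\<lambda>i\<in>{0..<n}. \<lambda>j\<in>{0..<n}.
      finsum R (\<lambda>k. A i k \<otimes>\<^bsub>R\<^esub> B k j) {0..<n})"

fun mat_sum :: "('a, 'm) ring_scheme \<Rightarrow> nat \<Rightarrow> (nat \<Rightarrow> 'a mat) \<Rightarrow> nat \<Rightarrow> 'a mat" where
  "mat_sum R n M 0 = mat_zero R n"
| "mat_sum R n M (Suc d) = mat_add R n (mat_sum R n M d) (M d)"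

end

theory Submission
  imports Defs
begin

(* Fourier analysis on the additive group of n x n matrices over F_q. For a nontrivial additive
  character psi of F_q, the functions Y \<mapsto> psi (tr (Z^T Y)) are orthogonal, so the number N of
  solutions equals q^(-n^2) times the sum over all Z of S_1(Z) ... S_d(Z) conj(E^(Z)) conj(F^(Z)),
  where S_i(Z) sums psi (tr (Z^T a b)) over a \<in> A_i, b \<in> B_i and E^(Z), F^(Z) are the Fourier
  transforms of the indicators of E and F. The term Z = 0 is the expected count P / q^(n^2).
  For Z \<noteq> 0 one has tr (Z^T a b) = tr ((Z b^T)^T a), so Cauchy-Schwarz in a and Parseval bound
  |S_i(Z)|^2 by |A_i| |B_i| q^(n^2) times the size of the largest fibre of b \<mapsto> Z b^T, which is at
  most q^(n^2 - n) because Z has a nonzero entry. Cauchy-Schwarz and Parseval once more give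
  sum_Z |E^(Z)| |F^(Z)| \<le> q^(n^2) sqrt (|E| |F|). Hence the error is at most
  q^(d (2 n^2 - n) / 2) sqrt P, which is the claimed bound with constant 1 (q need not be odd).
  A nontrivial additive character exists on every nontrivial finite abelian group: the quotient by a
  maximal proper subgroup is cyclic. *)

section \<open>Elementary inequalities and identities\<close>

lemma cis_2pi_div_cong:
  fixes k l :: int
  assumes "int m dvd k - l"
  shows "cis (2 * pi * k / m) = cis (2 * pi * l / m)"
proof (cases "m = 0")
  case False
  obtain j where "k = l + int m * j"
    using assms by (metis add_diff_cancel_left' diff_add_cancel dvd_def)
  then have "cis (2 * pi * k / m) = cis (2 * pi * l / m) * cis (2 * pi * j)"
    using False by (simp add: cis_mult field_simps)
  then show ?thesis
    by (simp add: cis_multiple_2pi)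
qed (use assms in simp)

lemma cis_2pi_div_neq_1:
  fixes m :: nat
  assumes "1 < m"
  shows "cis (2 * pi / m) \<noteq> 1"
proof -
  have "2 * pi / m \<le> 2 * pi / 2"
    using assms by (intro divide_left_mono) auto
  then have "cos (2 * pi / m) < cos 0"
    using assms by (intro cos_monotone_0_pi) auto
  then show ?thesis
    by (metis cis.sel(1) cos_zero one_complex.sel(1) order_less_irrefl)
qed

lemma Cauchy_Schwarz_sum:
  fixes a b :: "'i \<Rightarrow> real"
  shows "(\<Sum>i\<in>I. a i * b i)\<^sup>2 \<le> (\<Sum>i\<in>I. (a i)\<^sup>2) * (\<Sum>i\<in>I. (b i)\<^sup>2)"
proof -
  have "0 \<le> (\<Sum>i\<in>I. \<Sum>j\<in>I. (a i * b j - a j * b i)\<^sup>2)"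
    by (intro sum_nonneg) auto
  also have "\<dots> = (\<Sum>i\<in>I. \<Sum>j\<in>I. (a i)\<^sup>2 * (b j)\<^sup>2) + (\<Sum>i\<in>I. \<Sum>j\<in>I. (a j)\<^sup>2 * (b i)\<^sup>2)
      - 2 * (\<Sum>i\<in>I. \<Sum>j\<in>I. (a i * b i) * (a j * b j))"
    by (simp add: power2_eq_square algebra_simps sum.distrib sum_subtractf sum_distrib_left)
  also have "\<dots> = 2 * ((\<Sum>i\<in>I. (a i)\<^sup>2) * (\<Sum>i\<in>I. (b i)\<^sup>2) - (\<Sum>i\<in>I. a i * b i)\<^sup>2)"
    by (subst (2) sum.swap) (simp add: sum_product power2_eq_square)
  finally show ?thesis
    by simp
qed

lemma sum_squared_le_card_times_sum_squares:
  fixes f :: "'i \<Rightarrow> real"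
  shows "(\<Sum>i\<in>I. f i)\<^sup>2 \<le> real (card I) * (\<Sum>i\<in>I. (f i)\<^sup>2)"
  using Cauchy_Schwarz_sum[of "\<lambda>_. 1" f I] by simp

lemma sqrt_power_le_powr:
  fixes x :: real
  assumes x: "1 \<le> x" and n: "1 \<le> n"
  shows "sqrt (x ^ (n * n) * x ^ (n * n - n)) ^ d
    \<le> x powr (real d * real n ^ 2 - (real d - 1) * real n / 2 - 1 / 2)"
proof -
  have "sqrt (x ^ (n * n) * x ^ (n * n - n)) ^ d = x powr (real d * real n ^ 2 - real d * real n / 2)"
  proof -
    have "n \<le> n * n + n * n"
      using le_square[of n] by linarith
    then have "real (n * n + (n * n - n)) = 2 * real n ^ 2 - real n"
      by (simp add: of_nat_diff power2_eq_square)
    then show ?thesis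
      using x by (simp add: powr_realpow[symmetric] powr_add[symmetric] powr_half_sqrt[symmetric] powr_powr
          field_simps power2_eq_square)
  qed
  also have "\<dots> \<le> x powr (real d * real n ^ 2 - (real d - 1) * real n / 2 - 1 / 2)"
  proof (rule powr_mono[OF _ x])
    have "(real d - 1) * real n = real d * real n - real n" and "1 \<le> real n"
      using n by (simp_all add: algebra_simps)
    then show "real d * real n ^ 2 - real d * real n / 2
        \<le> real d * real n ^ 2 - (real d - 1) * real n / 2 - 1 / 2"
      by linarith
  qed
  finally show ?thesis .
qed

lemma nested_sum_mult_factor:
  fixes p :: "'a \<Rightarrow> 'b \<Rightarrow> 'c::comm_semiring_1"
  shows "(\<Sum>a\<in>A. \<Sum>b\<in>B. \<Sum>x\<in>U. \<Sum>y\<in>V. p a b * e x * f y)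
    = (\<Sum>a\<in>A. \<Sum>b\<in>B. p a b) * (\<Sum>x\<in>U. e x) * (\<Sum>y\<in>V. f y)"
proof -
  have "(\<Sum>a\<in>A. \<Sum>b\<in>B. p a b) * (\<Sum>x\<in>U. e x) * (\<Sum>y\<in>V. f y)
      = (\<Sum>a\<in>A. \<Sum>b\<in>B. p a b * ((\<Sum>x\<in>U. e x) * (\<Sum>y\<in>V. f y)))"
    by (simp only: mult.assoc sum_distrib_right)
  also have "\<dots> = (\<Sum>a\<in>A. \<Sum>b\<in>B. p a b * (\<Sum>x\<in>U. \<Sum>y\<in>V. e x * f y))"
    by (simp only: sum_product)
  also have "\<dots> = (\<Sum>a\<in>A. \<Sum>b\<in>B. \<Sum>x\<in>U. \<Sum>y\<in>V. p a b * e x * f y)"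
    by (simp only: sum_distrib_left mult.assoc)
  finally show ?thesis ..
qed

lemma prod_double_sum_PiE:
  fixes f :: "nat \<Rightarrow> 'a \<Rightarrow> 'b \<Rightarrow> 'c::comm_semiring_1"
  assumes "\<And>l. l < d \<Longrightarrow> finite (As l)" and "\<And>l. l < d \<Longrightarrow> finite (Bs l)"
  shows "(\<Sum>A\<in>(\<Pi>\<^sub>E l\<in>{..<d}. As l). \<Sum>B\<in>(\<Pi>\<^sub>E l\<in>{..<d}. Bs l). \<Prod>l<d. f l (A l) (B l))
    = (\<Prod>l<d. \<Sum>a\<in>As l. \<Sum>b\<in>Bs l. f l a b)"
proof -
  have "(\<Prod>l<d. \<Sum>a\<in>As l. \<Sum>b\<in>Bs l. f l a b) = (\<Sum>A\<in>(\<Pi>\<^sub>E l\<in>{..<d}. As l). \<Prod>l<d. \<Sum>b\<in>Bs l. f l (A l) b)"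
    using assms(1) by (intro prod_sum_PiE) auto
  also have "\<dots> = (\<Sum>A\<in>(\<Pi>\<^sub>E l\<in>{..<d}. As l). \<Sum>B\<in>(\<Pi>\<^sub>E l\<in>{..<d}. Bs l). \<Prod>l<d. f l (A l) (B l))"
    using assms(2) by (intro sum.cong refl prod_sum_PiE) auto
  finally show ?thesis ..
qed

section \<open>Additive characters\<close>

definition additive_character :: "('a, 'm) ring_scheme \<Rightarrow> ('a \<Rightarrow> complex) \<Rightarrow> bool" where
  "additive_character G \<psi> \<longleftrightarrow>
     (\<forall>x\<in>carrier G. \<forall>y\<in>carrier G. \<psi> (x \<oplus>\<^bsub>G\<^esub> y) = \<psi> x * \<psi> y) \<and>
     (\<forall>x\<in>carrier G. cmod (\<psi> x) = 1)"

lemma additive_character_add: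
  "additive_character G \<psi> \<Longrightarrow> x \<in> carrier G \<Longrightarrow> y \<in> carrier G \<Longrightarrow> \<psi> (x \<oplus>\<^bsub>G\<^esub> y) = \<psi> x * \<psi> y"
  by (simp add: additive_character_def)

lemma norm_additive_character:
  "additive_character G \<psi> \<Longrightarrow> x \<in> carrier G \<Longrightarrow> cmod (\<psi> x) = 1"
  by (simp add: additive_character_def)

context abelian_group
begin

lemma additive_character_zero:
  assumes "additive_character G \<psi>"
  shows "\<psi> \<zero> = 1"
proof -
  have "\<psi> \<zero> * \<psi> \<zero> = \<psi> \<zero> * 1" and "\<psi> \<zero> \<noteq> 0"
    using additive_character_add[OF assms, of \<zero> \<zero>] norm_additive_character[OF assms, of \<zero>] by auto
  then show ?thesis
    by (metis mult_left_cancel)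
qed

lemma additive_character_neg:
  assumes "additive_character G \<psi>" and x: "x \<in> carrier G"
  shows "\<psi> (\<ominus> x) = cnj (\<psi> x)"
proof -
  have "\<psi> x * \<psi> (\<ominus> x) = 1"
    using additive_character_add[OF assms(1) x, of "\<ominus> x"] additive_character_zero[OF assms(1)] x
    by (simp add: r_neg)
  moreover have "\<psi> x * cnj (\<psi> x) = 1"
    using norm_additive_character[OF assms] by (simp add: complex_norm_square[symmetric])
  ultimately show ?thesis
    by (metis mult.commute mult.left_neutral mult.assoc)
qed

lemma additive_character_finsum:
  assumes "additive_character G \<psi>" and "f \<in> S \<rightarrow> carrier G"
  shows "\<psi> (finsum G f S) = (\<Prod>s\<in>S. \<psi> (f s))"
  using assms(2)
proof (induction S rule: infinite_finite_induct)
  case (insert s S)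
  then show ?case
    using assms(1) by (simp add: finsum_insert finsum_closed additive_character_add)
qed (use additive_character_zero[OF assms(1)] in simp_all)

lemma sum_additive_character_eq_0:
  assumes "additive_character G \<psi>" and "finite (carrier G)"
    and g: "g \<in> carrier G" "\<psi> g \<noteq> 1"
  shows "(\<Sum>x\<in>carrier G. \<psi> x) = 0"
proof -
  have "(\<Sum>x\<in>carrier G. \<psi> x) = (\<Sum>x\<in>carrier G. \<psi> (x \<oplus> g))"
    using g(1) by (intro sum.reindex_bij_witness[of _ "\<lambda>x. x \<oplus> g" "\<lambda>x. x \<ominus> g"])
      (auto simp: a_minus_def a_assoc r_neg l_neg)
  also have "\<dots> = (\<Sum>x\<in>carrier G. \<psi> x) * \<psi> g"
    using assms(1) g(1) by (simp add: additive_character_add sum_distrib_right)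
  finally show ?thesis
    using g(2) by (metis mult.right_neutral mult_cancel_left)
qed

lemma maximal_proper_subgroup_exists:
  assumes "finite (carrier G)" and "carrier G \<noteq> {\<zero>}"
  obtains H where "subgroup H (add_monoid G)" and "H \<noteq> carrier G"
    and "\<And>K. subgroup K (add_monoid G) \<Longrightarrow> H \<subseteq> K \<Longrightarrow> K = H \<or> K = carrier G"
proof -
  let ?proper = "{H. subgroup H (add_monoid G) \<and> H \<noteq> carrier G}"
  have "?proper \<subseteq> Pow (carrier G)"
    using subgroup.subset by fastforce
  then have "finite ?proper"
    using assms(1) by (rule finite_subset[OF _ finite_Pow_iff[THEN iffD2]])
  moreover have "{\<zero>} \<in> ?proper"
    using add.triv_subgroup assms(2) by auto
  ultimately obtain H where "H \<in> ?proper" and "\<forall>K\<in>?proper. H \<subseteq> K \<longrightarrow> K = H"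
    using finite_has_maximal[of ?proper] by blast
  with that show ?thesis by blast
qed

lemma subgroup_add_mem_iff:
  assumes H: "subgroup H (add_monoid G)" and a: "a \<in> carrier G" and h: "h \<in> H"
  shows "a \<oplus> h \<in> H \<longleftrightarrow> a \<in> H"
proof
  have "h \<in> carrier G"
    using h subgroup.subset[OF H] by auto
  then have "a = (a \<oplus> h) \<oplus> \<ominus> h"
    using a by (simp add: a_assoc r_neg)
  then show "a \<in> H" if "a \<oplus> h \<in> H"
    using that h add.subgroupE(3,4)[OF H] by metis
qed (use h add.subgroupE(4)[OF H] in blast)

lemma subgroup_add_cyclic:
  assumes H: "subgroup H (add_monoid G)" and g: "g \<in> carrier G"
  shows "subgroup {x \<in> carrier G. \<exists>k::int. x \<ominus> add_pow G k g \<in> H} (add_monoid G)"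
    (is "subgroup ?K _")
proof (rule add.subgroupI)
  show "?K \<subseteq> carrier G"
    by auto
  have neg_zero: "\<ominus> \<zero> = \<zero>"
    using r_neg[of \<zero>] by simp
  have "\<zero> \<in> ?K"
    using subgroup.one_closed[OF H] by (auto simp: a_minus_def add_pow_int_ge neg_zero intro!: exI[of _ 0])
  then show "?K \<noteq> {}"
    by blast
next
  fix x assume "x \<in> ?K"
  then obtain k :: int where "x \<in> carrier G" "x \<ominus> add_pow G k g \<in> H"
    by blast
  moreover have "\<ominus> x \<ominus> add_pow G (- k) g = \<ominus> (x \<ominus> add_pow G k g)"
    using calculation g by (simp add: add.int_pow_neg a_minus_def minus_add)
  ultimately have "\<ominus> x \<ominus> add_pow G (- k) g \<in> H"
    using add.subgroupE(3)[OF H] by simp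
  then show "\<ominus> x \<in> ?K"
    using \<open>x \<in> carrier G\<close> by auto
next
  fix x y assume "x \<in> ?K" "y \<in> ?K"
  then obtain k l :: int where "x \<in> carrier G" "x \<ominus> add_pow G k g \<in> H"
    and "y \<in> carrier G" "y \<ominus> add_pow G l g \<in> H"
    by blast
  moreover have "(x \<oplus> y) \<ominus> add_pow G (k + l) g = (x \<ominus> add_pow G k g) \<oplus> (y \<ominus> add_pow G l g)"
    using calculation g by (simp add: add.int_pow_mult a_minus_def minus_add a_ac)
  ultimately have "(x \<oplus> y) \<ominus> add_pow G (k + l) g \<in> H"
    using add.subgroupE(4)[OF H] by simp
  then show "x \<oplus> y \<in> ?K"
    using \<open>x \<in> carrier G\<close> \<open>y \<in> carrier G\<close> by auto
qed

lemma subgroup_multiples_iff_dvd: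
  assumes fin: "finite (carrier G)" and H: "subgroup H (add_monoid G)"
    and g: "g \<in> carrier G" "g \<notin> H"
  obtains m :: nat where "1 < m" and "\<And>k::int. add_pow G k g \<in> H \<longleftrightarrow> int m dvd k"
proof -
  interpret H: subgroup H "add_monoid G" by (fact H)
  let ?P = "\<lambda>m::nat. 0 < m \<and> add_pow G m g \<in> H"
  define m where "m = (LEAST m. ?P m)"
  have "?P (order (add_monoid G))"
    using fin g add.pow_order_eq_1 H.one_closed by (simp add: add.order_gt_0_iff_finite)
  then have Pm: "?P m"
    unfolding m_def by (rule LeastI)
  have m_least: "m \<le> j" if "?P j" for j
    unfolding m_def using that by (rule Least_le)
  have mod_iff: "add_pow G k g \<in> H \<longleftrightarrow> add_pow G (k mod int m) g \<in> H" for k :: int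
  proof -
    have "add_pow G k g = add_pow G (k mod int m + int m * (k div int m)) g"
      by simp
    also have "\<dots> = add_pow G (k mod int m) g \<oplus> add_pow G (int m * (k div int m)) g"
      using g(1) by (rule add.int_pow_mult)
    also have "add_pow G (int m * (k div int m)) g = add_pow G (k div int m) (add_pow G m g)"
      using add.int_pow_pow[OF g(1), of "k div int m" "int m"] add_pow_int_ge[of "int m" G g] by simp
    finally show ?thesis
      using subgroup_add_mem_iff[OF H add.int_pow_closed[OF g(1)] add.subgroup_int_pow_closed[OF H Pm[THEN conjunct2]]]
      by simp
  qed
  have "add_pow G k g \<in> H \<longleftrightarrow> int m dvd k" for k :: int
  proof -
    define r where "r = nat (k mod int m)"
    have r: "k mod int m = int r" "r < m"
      using Pm by (auto simp: r_def nat_less_iff)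
    have "add_pow G r g \<in> H \<longleftrightarrow> r = 0"
      using m_least[of r] r(2) H.one_closed by (cases "r = 0") auto
    then show ?thesis
      using mod_iff[of k] r(1) by (simp add: add_pow_int_ge dvd_eq_mod_eq_0)
  qed
  moreover have "1 < m"
    using Pm g by (cases "m = 1") auto
  ultimately show ?thesis
    using that by blast
qed

lemma maximal_subgroup_coset_multiple:
  assumes H: "subgroup H (add_monoid G)"
    and maximal: "\<And>K. subgroup K (add_monoid G) \<Longrightarrow> H \<subseteq> K \<Longrightarrow> K = H \<or> K = carrier G"
    and g: "g \<in> carrier G" "g \<notin> H" and x: "x \<in> carrier G"
  shows "\<exists>k::int. x \<ominus> add_pow G k g \<in> H"
proof -
  let ?K = "{x \<in> carrier G. \<exists>k::int. x \<ominus> add_pow G k g \<in> H}"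
  have neg_zero: "\<ominus> \<zero> = \<zero>"
    using r_neg[of \<zero>] by simp
  have "H \<subseteq> ?K"
    using subgroup.subset[OF H] by (auto simp: a_minus_def add_pow_int_ge neg_zero intro!: exI[of _ 0])
  moreover have "g \<in> ?K"
    using g(1) subgroup.one_closed[OF H] by (auto simp: a_minus_def r_neg add_pow_int_ge intro!: exI[of _ 1])
  ultimately have "?K = carrier G"
    using maximal[OF subgroup_add_cyclic[OF H g(1)]] g(2) by blast
  then show ?thesis
    using x by blast
qed

lemma additive_character_cyclic_quotient:
  assumes H: "subgroup H (add_monoid G)" and g: "g \<in> carrier G"
    and multiple_iff: "\<And>k::int. add_pow G k g \<in> H \<longleftrightarrow> int m dvd k"
    and cosets: "\<And>x. x \<in> carrier G \<Longrightarrow> \<exists>k::int. x \<ominus> add_pow G k g \<in> H"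
  obtains \<psi> where "additive_character G \<psi>" and "\<psi> g = cis (2 * pi / m)"
proof -
  define \<psi> where "\<psi> x = cis (2 * pi * (SOME k::int. x \<ominus> add_pow G k g \<in> H) / m)" for x
  have \<psi>_eq: "\<psi> x = cis (2 * pi * k / m)"
    if x: "x \<in> carrier G" and k: "x \<ominus> add_pow G k g \<in> H" for x and k :: int
  proof -
    let ?k = "SOME k::int. x \<ominus> add_pow G k g \<in> H"
    have "x \<ominus> add_pow G ?k g \<in> H"
      using k by (rule someI)
    then have "(x \<ominus> add_pow G ?k g) \<oplus> \<ominus> (x \<ominus> add_pow G k g) \<in> H"
      using k add.subgroupE(3,4)[OF H] by blast
    also have "(x \<ominus> add_pow G ?k g) \<oplus> \<ominus> (x \<ominus> add_pow G k g) = add_pow G (k - ?k) g"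
      using x g by (simp add: add.int_pow_diff a_minus_def minus_add a_ac r_neg1 r_neg2)
    finally show ?thesis
      unfolding \<psi>_def using multiple_iff cis_2pi_div_cong by metis
  qed
  have "\<psi> (x \<oplus> y) = \<psi> x * \<psi> y" if x: "x \<in> carrier G" and y: "y \<in> carrier G" for x y
  proof -
    obtain k l :: int where k: "x \<ominus> add_pow G k g \<in> H" and l: "y \<ominus> add_pow G l g \<in> H"
      using cosets x y by meson
    have "(x \<oplus> y) \<ominus> add_pow G (k + l) g = (x \<ominus> add_pow G k g) \<oplus> (y \<ominus> add_pow G l g)"
      using x y g by (simp add: add.int_pow_mult a_minus_def minus_add a_ac)
    then have "(x \<oplus> y) \<ominus> add_pow G (k + l) g \<in> H"
      using k l add.subgroupE(4)[OF H] by simp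
    then show ?thesis
      using \<psi>_eq x y k l by (simp add: cis_mult add_divide_distrib distrib_left)
  qed
  then have "additive_character G \<psi>"
    by (simp add: additive_character_def \<psi>_def)
  moreover have "\<psi> g = cis (2 * pi / m)"
    using g subgroup.one_closed[OF H] \<psi>_eq[of g 1] by (simp add: add_pow_int_ge a_minus_def r_neg)
  ultimately show ?thesis
    using that by blast
qed

lemma nontrivial_additive_character_exists:
  assumes fin: "finite (carrier G)" and nontrivial: "carrier G \<noteq> {\<zero>}"
  obtains \<psi> g where "additive_character G \<psi>" and "g \<in> carrier G" and "\<psi> g \<noteq> 1"
proof -
  obtain H where H: "subgroup H (add_monoid G)" "H \<noteq> carrier G"
    and maximal: "\<And>K. subgroup K (add_monoid G) \<Longrightarrow> H \<subseteq> K \<Longrightarrow> K = H \<or> K = carrier G"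
    using maximal_proper_subgroup_exists[OF fin nontrivial] by blast
  obtain g where g: "g \<in> carrier G" "g \<notin> H"
    using H subgroup.subset[OF H(1)] by auto
  obtain m where m: "1 < m" and multiple_iff: "\<And>k::int. add_pow G k g \<in> H \<longleftrightarrow> int m dvd k"
    using subgroup_multiples_iff_dvd[OF fin H(1) g] by blast
  obtain \<psi> where "additive_character G \<psi>" and "\<psi> g = cis (2 * pi / m)"
    using additive_character_cyclic_quotient[OF H(1) g(1) multiple_iff] maximal_subgroup_coset_multiple[OF H(1) maximal g]
    by blast
  moreover have "cis (2 * pi / m) \<noteq> 1"
    using m by (rule cis_2pi_div_neq_1)
  ultimately show ?thesis
    using that g(1) by simp
qed

end

lemma (in field) sum_additive_character_mult:
  assumes "additive_character R \<psi>" and "finite (carrier R)"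
    and "g \<in> carrier R" "\<psi> g \<noteq> 1" and y: "y \<in> carrier R"
  shows "(\<Sum>x\<in>carrier R. \<psi> (x \<otimes> y)) = (if y = \<zero> then of_nat (card (carrier R)) else 0)"
proof (cases "y = \<zero>")
  case True
  then show ?thesis
    using additive_character_zero[OF assms(1)] by simp
next
  case False
  then have y_unit: "y \<in> Units R"
    using y field_Units by blast
  have "(\<Sum>x\<in>carrier R. \<psi> (x \<otimes> y)) = (\<Sum>x\<in>carrier R. \<psi> x)"
    using y_unit by (intro sum.reindex_bij_witness[of _ "\<lambda>x. x \<otimes> inv y" "\<lambda>x. x \<otimes> y"])
      (auto simp: m_assoc Units_r_inv Units_l_inv Units_closed Units_inv_closed)
  also have "\<dots> = 0"
    using assms(1-4) by (rule sum_additive_character_eq_0)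
  finally show ?thesis
    using False by simp
qed

section \<open>Square matrices\<close>

definition mat_transpose :: "nat \<Rightarrow> 'a mat \<Rightarrow> 'a mat" where
  "mat_transpose n B = (\<lambda>i\<in>{0..<n}. \<lambda>j\<in>{0..<n}. B j i)"

lemma mat_set_entry:
  "Z \<in> mat_set R n \<Longrightarrow> i < n \<Longrightarrow> j < n \<Longrightarrow> Z i j \<in> carrier R"
  unfolding mat_set_def by (simp add: PiE_iff)

lemma mat_set_restrictI:
  "(\<And>i j. i < n \<Longrightarrow> j < n \<Longrightarrow> f i j \<in> carrier R) \<Longrightarrow>
    (\<lambda>i\<in>{0..<n}. \<lambda>j\<in>{0..<n}. f i j) \<in> mat_set R n"
  unfolding mat_set_def by auto

lemma mat_set_eqI:
  assumes "Z \<in> mat_set R n" and "Y \<in> mat_set R n" and "\<And>i j. i < n \<Longrightarrow> j < n \<Longrightarrow> Z i j = Y i j"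
  shows "Z = Y"
proof (rule PiE_ext)
  show "Z \<in> {0..<n} \<rightarrow>\<^sub>E ({0..<n} \<rightarrow>\<^sub>E carrier R)" "Y \<in> {0..<n} \<rightarrow>\<^sub>E ({0..<n} \<rightarrow>\<^sub>E carrier R)"
    using assms(1,2) by (simp_all add: mat_set_def)
  fix i assume "i \<in> {0..<n}"
  then show "Z i = Y i"
    using assms by (intro PiE_ext[of _ "{0..<n}" "\<lambda>_. carrier R"]) (auto simp: mat_set_def PiE_iff)
qed

lemma finite_mat_set: "finite (carrier R) \<Longrightarrow> finite (mat_set R n)"
  unfolding mat_set_def by (intro finite_PiE) auto

lemma card_mat_set: "card (mat_set R n) = card (carrier R) ^ (n * n)"
  unfolding mat_set_def by (simp add: card_PiE power_mult)

lemma mat_transpose_closed: "B \<in> mat_set R n \<Longrightarrow> mat_transpose n B \<in> mat_set R n"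
  unfolding mat_transpose_def by (intro mat_set_restrictI mat_set_entry)

lemma sum_mat_set_prod:
  fixes f :: "nat \<Rightarrow> nat \<Rightarrow> 'a \<Rightarrow> 'b::comm_semiring_1"
  assumes "finite (carrier R)"
  shows "(\<Sum>Z\<in>mat_set R n. \<Prod>i\<in>{0..<n}. \<Prod>j\<in>{0..<n}. f i j (Z i j))
    = (\<Prod>i\<in>{0..<n}. \<Prod>j\<in>{0..<n}. \<Sum>x\<in>carrier R. f i j x)"
proof -
  have "(\<Prod>i\<in>{0..<n}. \<Prod>j\<in>{0..<n}. \<Sum>x\<in>carrier R. f i j x)
      = (\<Prod>i\<in>{0..<n}. \<Sum>r\<in>{0..<n} \<rightarrow>\<^sub>E carrier R. \<Prod>j\<in>{0..<n}. f i j (r j))"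
    using assms by (simp add: prod_sum_PiE)
  also have "\<dots> = (\<Sum>Z\<in>mat_set R n. \<Prod>i\<in>{0..<n}. \<Prod>j\<in>{0..<n}. f i j (Z i j))"
    unfolding mat_set_def using assms by (intro prod_sum_PiE) (auto intro: finite_PiE)
  finally show ?thesis ..
qed

definition mat_bilinear_solutions ::
    "('a, 'm) ring_scheme \<Rightarrow> nat \<Rightarrow> nat \<Rightarrow> (nat \<Rightarrow> 'a mat set) \<Rightarrow> (nat \<Rightarrow> 'a mat set) \<Rightarrow>
      'a mat set \<Rightarrow> 'a mat set \<Rightarrow> ((nat \<Rightarrow> 'a mat) \<times> (nat \<Rightarrow> 'a mat) \<times> 'a mat \<times> 'a mat) set" where
  "mat_bilinear_solutions R n d As Bs \<E> \<F> = {(A, B, E, F).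
     A \<in> (\<Pi>\<^sub>E i\<in>{..<d}. As i) \<and> B \<in> (\<Pi>\<^sub>E i\<in>{..<d}. Bs i) \<and> E \<in> \<E> \<and> F \<in> \<F> \<and>
     mat_sum R n (\<lambda>i. mat_mult R n (A i) (B i)) d = mat_add R n E F}"

lemma of_nat_card_mat_bilinear_solutions:
  assumes "\<And>l. l < d \<Longrightarrow> finite (As l)" and "\<And>l. l < d \<Longrightarrow> finite (Bs l)"
    and "finite \<E>" and "finite \<F>"
  shows "of_nat (card (mat_bilinear_solutions R n d As Bs \<E> \<F>))
    = (\<Sum>A\<in>(\<Pi>\<^sub>E l\<in>{..<d}. As l). \<Sum>B\<in>(\<Pi>\<^sub>E l\<in>{..<d}. Bs l). \<Sum>E\<in>\<E>. \<Sum>F\<in>\<F>.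
        if mat_sum R n (\<lambda>l. mat_mult R n (A l) (B l)) d = mat_add R n E F then 1 else (0::'c::comm_semiring_1))"
proof -
  let ?T = "(\<Pi>\<^sub>E l\<in>{..<d}. As l) \<times> (\<Pi>\<^sub>E l\<in>{..<d}. Bs l) \<times> \<E> \<times> \<F>"
  let ?solves = "\<lambda>(A, B, E, F). mat_sum R n (\<lambda>l. mat_mult R n (A l) (B l)) d = mat_add R n E F"
  have "finite (\<Pi>\<^sub>E l\<in>{..<d}. As l)" "finite (\<Pi>\<^sub>E l\<in>{..<d}. Bs l)"
    by (rule finite_PiE, simp, simp add: assms)+
  then have "finite ?T"
    using assms(3,4) by (intro finite_cartesian_product)
  moreover have "mat_bilinear_solutions R n d As Bs \<E> \<F> = {p \<in> ?T. ?solves p}"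
    by (auto simp: mat_bilinear_solutions_def)
  ultimately have "of_nat (card (mat_bilinear_solutions R n d As Bs \<E> \<F>))
      = (\<Sum>p\<in>?T. if ?solves p then 1 else (0::'c))"
    by (simp add: sum.inter_filter[symmetric])
  then show ?thesis
    by (simp only: sum.cartesian_product split_def)
qed

context ring
begin

lemma mat_zero_closed: "mat_zero R n \<in> mat_set R n"
  unfolding mat_zero_def by (intro mat_set_restrictI) simp

lemma mat_add_closed: "E \<in> mat_set R n \<Longrightarrow> F \<in> mat_set R n \<Longrightarrow> mat_add R n E F \<in> mat_set R n"
  unfolding mat_add_def by (intro mat_set_restrictI add.m_closed mat_set_entry)

lemma mat_mult_closed: "A \<in> mat_set R n \<Longrightarrow> B \<in> mat_set R n \<Longrightarrow> mat_mult R n A B \<in> mat_set R n"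
  unfolding mat_mult_def by (intro mat_set_restrictI finsum_closed) (auto intro!: m_closed mat_set_entry)

lemma mat_sum_closed: "(\<And>l. l < d \<Longrightarrow> M l \<in> mat_set R n) \<Longrightarrow> mat_sum R n M d \<in> mat_set R n"
  by (induction d) (auto simp: mat_zero_closed mat_add_closed)

lemma mat_mult_transpose_apply:
  assumes "Z \<in> mat_set R n" "B \<in> mat_set R n" "i < n" "k < n"
  shows "mat_mult R n Z (mat_transpose n B) i k = (\<Oplus>j\<in>{0..<n}. Z i j \<otimes> B k j)"
  unfolding mat_mult_def mat_transpose_def using assms
  by (auto intro!: finsum_cong' m_closed mat_set_entry)

end

context domain
begin

lemma mat_mult_transpose_column_cancel:
  assumes Z: "Z \<in> mat_set R n" and i0: "i0 < n" and j0: "j0 < n" "Z i0 j0 \<noteq> \<zero>"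
    and B1: "B1 \<in> mat_set R n" and B2: "B2 \<in> mat_set R n"
    and eq: "mat_mult R n Z (mat_transpose n B1) = mat_mult R n Z (mat_transpose n B2)"
    and off: "\<And>k j. k < n \<Longrightarrow> j < n \<Longrightarrow> j \<noteq> j0 \<Longrightarrow> B1 k j = B2 k j"
  shows "B1 = B2"
proof (rule mat_set_eqI[OF B1 B2])
  fix k j assume k: "k < n" and j: "j < n"
  let ?J = "{0..<n} - {j0}"
  have split: "(\<Oplus>j\<in>{0..<n}. Z i0 j \<otimes> B k j) = Z i0 j0 \<otimes> B k j0 \<oplus> (\<Oplus>j\<in>?J. Z i0 j \<otimes> B k j)"
    if "B \<in> mat_set R n" for B
  proof -
    have "(\<Oplus>j\<in>{0..<n}. Z i0 j \<otimes> B k j) = (\<Oplus>j\<in>insert j0 ?J. Z i0 j \<otimes> B k j)"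
      using j0 by (simp add: insert_absorb)
    also have "\<dots> = Z i0 j0 \<otimes> B k j0 \<oplus> (\<Oplus>j\<in>?J. Z i0 j \<otimes> B k j)"
      using Z that i0 j0 k by (intro finsum_insert) (auto intro!: m_closed mat_set_entry)
    finally show ?thesis .
  qed
  have "(\<Oplus>j\<in>?J. Z i0 j \<otimes> B1 k j) = (\<Oplus>j\<in>?J. Z i0 j \<otimes> B2 k j)"
    using Z B1 B2 i0 k off by (intro finsum_cong') (auto intro!: m_closed mat_set_entry)
  moreover have "(\<Oplus>j\<in>{0..<n}. Z i0 j \<otimes> B1 k j) = (\<Oplus>j\<in>{0..<n}. Z i0 j \<otimes> B2 k j)"
    using eq mat_mult_transpose_apply[OF Z B1 i0 k] mat_mult_transpose_apply[OF Z B2 i0 k] by metis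
  ultimately have "Z i0 j0 \<otimes> B1 k j0 = Z i0 j0 \<otimes> B2 k j0"
    unfolding split[OF B1] split[OF B2]
    using Z B1 B2 i0 j0 k by (simp add: add.right_cancel finsum_closed mat_set_entry Pi_iff)
  then have "B1 k j0 = B2 k j0"
    using Z B1 B2 i0 j0 k by (simp add: m_lcancel mat_set_entry)
  then show "B1 k j = B2 k j"
    using off k j by (cases "j = j0") auto
qed

lemma card_mat_mult_transpose_fibre_le:
  assumes fin: "finite (carrier R)" and Z: "Z \<in> mat_set R n" "Z \<noteq> mat_zero R n"
  shows "card {B \<in> mat_set R n. mat_mult R n Z (mat_transpose n B) = C} \<le> card (carrier R) ^ (n * n - n)"
proof -
  obtain i0 j0 where i0: "i0 < n" and j0: "j0 < n" "Z i0 j0 \<noteq> \<zero>"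
    using Z mat_set_eqI[OF Z(1) mat_zero_closed] by (auto simp: mat_zero_def)
  let ?fibre = "{B \<in> mat_set R n. mat_mult R n Z (mat_transpose n B) = C}"
  let ?J = "{0..<n} - {j0}"
  define drop_column where "drop_column B = (\<lambda>k\<in>{0..<n}. restrict (B k) ?J)" for B :: "'a mat"
  have "inj_on drop_column ?fibre"
  proof (rule inj_onI)
    fix B1 B2 assume "B1 \<in> ?fibre" "B2 \<in> ?fibre" "drop_column B1 = drop_column B2"
    moreover have "B1 k j = B2 k j"
      if "drop_column B1 = drop_column B2" "k < n" "j < n" "j \<noteq> j0" for k j
      using fun_cong[OF fun_cong[OF that(1), of k], of j] that(2-4) by (simp add: drop_column_def)
    ultimately show "B1 = B2"
      using mat_mult_transpose_column_cancel[OF Z(1) i0 j0] by auto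
  qed
  moreover have "drop_column ` ?fibre \<subseteq> {0..<n} \<rightarrow>\<^sub>E (?J \<rightarrow>\<^sub>E carrier R)"
  proof (rule image_subsetI)
    fix B assume "B \<in> ?fibre"
    then show "drop_column B \<in> {0..<n} \<rightarrow>\<^sub>E (?J \<rightarrow>\<^sub>E carrier R)"
      unfolding drop_column_def restrict_PiE_iff by (auto intro: mat_set_entry)
  qed
  ultimately have "card ?fibre \<le> card ({0..<n} \<rightarrow>\<^sub>E (?J \<rightarrow>\<^sub>E carrier R))"
    using fin by (intro card_inj_on_le finite_PiE) auto
  also have "\<dots> = card (carrier R) ^ (n * n - n)"
    using j0 by (simp add: card_PiE power_mult[symmetric] diff_mult_distrib)
  finally show ?thesis .
qed

lemma card_mat_mult_transpose_pairs_le: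
  assumes fin: "finite (carrier R)" and Z: "Z \<in> mat_set R n" "Z \<noteq> mat_zero R n"
    and B: "B \<subseteq> mat_set R n"
  shows "card {(b, b') \<in> B \<times> B. mat_mult R n Z (mat_transpose n b) = mat_mult R n Z (mat_transpose n b')}
    \<le> card B * card (carrier R) ^ (n * n - n)"
proof -
  let ?W = "\<lambda>b. mat_mult R n Z (mat_transpose n b)"
  have finite: "finite B"
    using B finite_subset finite_mat_set[OF fin] by blast
  have fibre: "card {b' \<in> B. ?W b' = ?W b} \<le> card (carrier R) ^ (n * n - n)" for b
  proof -
    have "card {b' \<in> B. ?W b' = ?W b} \<le> card {b' \<in> mat_set R n. ?W b' = ?W b}"
      using B finite_mat_set[OF fin] by (intro card_mono) auto
    also have "\<dots> \<le> card (carrier R) ^ (n * n - n)"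
      by (rule card_mat_mult_transpose_fibre_le[OF fin Z])
    finally show ?thesis .
  qed
  have "{(b, b') \<in> B \<times> B. ?W b = ?W b'} = Sigma B (\<lambda>b. {b' \<in> B. ?W b' = ?W b})"
    by auto
  then have "card {(b, b') \<in> B \<times> B. ?W b = ?W b'} = (\<Sum>b\<in>B. card {b' \<in> B. ?W b' = ?W b})"
    using finite by (simp add: card_SigmaI)
  also have "\<dots> \<le> card B * card (carrier R) ^ (n * n - n)"
    using fibre sum_bounded_above[of B _ "card (carrier R) ^ (n * n - n)"] by simp
  finally show ?thesis .
qed

end

section \<open>Fourier analysis on the matrix space\<close>

locale finite_field_character = field R for R (structure) +
  fixes \<psi> :: "'a \<Rightarrow> complex"
  assumes finite_carrier: "finite (carrier R)"
    and character: "additive_character R \<psi>"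
    and nontrivial: "\<exists>g\<in>carrier R. \<psi> g \<noteq> 1"
begin

(* psi (tr (Z^T Y)), expanded entrywise. *)
definition mat_char :: "nat \<Rightarrow> 'a mat \<Rightarrow> 'a mat \<Rightarrow> complex" where
  "mat_char n Z Y = (\<Prod>i\<in>{0..<n}. \<Prod>j\<in>{0..<n}. \<psi> (Z i j \<otimes> Y i j))"

lemma character_mult_finsum:
  assumes "a \<in> carrier R" and "f \<in> S \<rightarrow> carrier R" and "finite S"
  shows "\<psi> (a \<otimes> (\<Oplus>s\<in>S. f s)) = (\<Prod>s\<in>S. \<psi> (a \<otimes> f s))"
  using assms by (simp add: finsum_rdistr additive_character_finsum[OF character] Pi_iff)

lemma mat_char_zero_left:
  "Y \<in> mat_set R n \<Longrightarrow> mat_char n (mat_zero R n) Y = 1"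
  unfolding mat_char_def mat_zero_def
  by (simp add: additive_character_zero[OF character] mat_set_entry)

lemma mat_char_zero_right:
  "Z \<in> mat_set R n \<Longrightarrow> mat_char n Z (mat_zero R n) = 1"
  unfolding mat_char_def mat_zero_def
  by (simp add: additive_character_zero[OF character] mat_set_entry)

lemma mat_char_add:
  assumes "Z \<in> mat_set R n" "E \<in> mat_set R n" "F \<in> mat_set R n"
  shows "mat_char n Z (mat_add R n E F) = mat_char n Z E * mat_char n Z F"
  unfolding mat_char_def mat_add_def prod.distrib[symmetric]
  using assms by (intro prod.cong refl)
    (simp add: r_distr additive_character_add[OF character] mat_set_entry)

lemma mat_char_sum:
  assumes "Z \<in> mat_set R n" and "\<And>l. l < d \<Longrightarrow> M l \<in> mat_set R n"
  shows "mat_char n Z (mat_sum R n M d) = (\<Prod>l<d. mat_char n Z (M l))"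
  using assms(2)
proof (induction d)
  case 0
  then show ?case
    using assms(1) by (simp add: mat_char_zero_right)
next
  case (Suc d)
  then show ?case
    using assms(1) by (simp add: mat_char_add mat_sum_closed)
qed

lemma mat_char_mult:
  assumes Z: "Z \<in> mat_set R n" and A: "A \<in> mat_set R n" and B: "B \<in> mat_set R n"
  shows "mat_char n Z (mat_mult R n A B) = mat_char n A (mat_mult R n Z (mat_transpose n B))"
proof -
  have "mat_char n Z (mat_mult R n A B)
      = (\<Prod>i\<in>{0..<n}. \<Prod>j\<in>{0..<n}. \<Prod>k\<in>{0..<n}. \<psi> (A i k \<otimes> (Z i j \<otimes> B k j)))"
    unfolding mat_char_def mat_mult_def
    using Z A B by (intro prod.cong refl)
      (simp add: character_mult_finsum mat_set_entry m_lcomm[of "Z _ _"])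
  also have "\<dots> = (\<Prod>i\<in>{0..<n}. \<Prod>k\<in>{0..<n}. \<Prod>j\<in>{0..<n}. \<psi> (A i k \<otimes> (Z i j \<otimes> B k j)))"
    by (intro prod.cong refl prod.swap)
  also have "\<dots> = mat_char n A (mat_mult R n Z (mat_transpose n B))"
    unfolding mat_char_def
    using Z A B by (intro prod.cong refl)
      (simp add: mat_mult_transpose_apply character_mult_finsum mat_set_entry)
  finally show ?thesis .
qed

lemma sum_mat_char_orthogonal:
  assumes Y1: "Y1 \<in> mat_set R n" and Y2: "Y2 \<in> mat_set R n"
  shows "(\<Sum>Z\<in>mat_set R n. mat_char n Z Y1 * cnj (mat_char n Z Y2))
    = (if Y1 = Y2 then of_nat (card (mat_set R n)) else 0)"
proof -
  obtain g where g: "g \<in> carrier R" "\<psi> g \<noteq> 1"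
    using nontrivial by blast
  let ?q = "card (carrier R)"
  have entry: "\<psi> (z \<otimes> y1) * cnj (\<psi> (z \<otimes> y2)) = \<psi> (z \<otimes> (y1 \<ominus> y2))"
    if "z \<in> carrier R" "y1 \<in> carrier R" "y2 \<in> carrier R" for z y1 y2
    using that by (simp add: a_minus_def r_distr r_minus additive_character_add[OF character]
        additive_character_neg[OF character])
  have "(\<Sum>Z\<in>mat_set R n. mat_char n Z Y1 * cnj (mat_char n Z Y2))
      = (\<Sum>Z\<in>mat_set R n. \<Prod>i\<in>{0..<n}. \<Prod>j\<in>{0..<n}. \<psi> (Z i j \<otimes> (Y1 i j \<ominus> Y2 i j)))"
    unfolding mat_char_def using Y1 Y2
    by (intro sum.cong refl) (simp add: cnj_prod prod.distrib[symmetric] entry mat_set_entry)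
  also have "\<dots> = (\<Prod>i\<in>{0..<n}. \<Prod>j\<in>{0..<n}. \<Sum>x\<in>carrier R. \<psi> (x \<otimes> (Y1 i j \<ominus> Y2 i j)))"
    using finite_carrier by (rule sum_mat_set_prod)
  also have "\<dots> = (\<Prod>i\<in>{0..<n}. \<Prod>j\<in>{0..<n}. if Y1 i j = Y2 i j then of_nat ?q else 0)"
    using Y1 Y2 by (intro prod.cong refl)
      (simp add: sum_additive_character_mult[OF character finite_carrier g] mat_set_entry
        r_right_minus_eq)
  also have "\<dots> = (if Y1 = Y2 then of_nat (card (mat_set R n)) else 0)"
  proof (cases "Y1 = Y2")
    case True
    then show ?thesis
      by (simp add: card_mat_set power_mult)
  next
    case False
    then obtain i j where "i < n" "j < n" "Y1 i j \<noteq> Y2 i j"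
      using mat_set_eqI[OF Y1 Y2] by blast
    then have "(\<Prod>i\<in>{0..<n}. \<Prod>j\<in>{0..<n}. if Y1 i j = Y2 i j then of_nat ?q else 0) = (0::complex)"
      by (force simp: prod_zero_iff)
    then show ?thesis
      using False by simp
  qed
  finally show ?thesis .
qed

lemma sum_norm_mat_char_sum_sq:
  assumes "finite S" and "f ` S \<subseteq> mat_set R n"
  shows "(\<Sum>Z\<in>mat_set R n. (cmod (\<Sum>s\<in>S. mat_char n Z (f s)))\<^sup>2)
    = real (card (mat_set R n)) * real (card {(s, t) \<in> S \<times> S. f s = f t})"
proof -
  have "complex_of_real (\<Sum>Z\<in>mat_set R n. (cmod (\<Sum>s\<in>S. mat_char n Z (f s)))\<^sup>2)
      = (\<Sum>Z\<in>mat_set R n. (\<Sum>s\<in>S. mat_char n Z (f s)) * cnj (\<Sum>t\<in>S. mat_char n Z (f t)))"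
    by (simp only: of_real_sum complex_norm_square)
  also have "\<dots> = (\<Sum>Z\<in>mat_set R n. \<Sum>s\<in>S. \<Sum>t\<in>S. mat_char n Z (f s) * cnj (mat_char n Z (f t)))"
    by (simp add: cnj_sum sum_product)
  also have "\<dots> = (\<Sum>s\<in>S. \<Sum>t\<in>S. \<Sum>Z\<in>mat_set R n. mat_char n Z (f s) * cnj (mat_char n Z (f t)))"
    by (simp only: sum.swap[of _ "mat_set R n" S])
  also have "\<dots> = (\<Sum>s\<in>S. \<Sum>t\<in>S. if f s = f t then of_nat (card (mat_set R n)) else 0)"
    using assms(2) by (intro sum.cong refl sum_mat_char_orthogonal) auto
  also have "\<dots> = (\<Sum>p\<in>S \<times> S. if f (fst p) = f (snd p) then of_nat (card (mat_set R n)) else 0)"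
    by (simp add: sum.cartesian_product case_prod_beta)
  also have "\<dots> = complex_of_real (real (card (mat_set R n)) * real (card {p \<in> S \<times> S. f (fst p) = f (snd p)}))"
    using assms(1) by (simp add: sum.inter_filter[symmetric])
  also have "{p \<in> S \<times> S. f (fst p) = f (snd p)} = {(s, t) \<in> S \<times> S. f s = f t}"
    by auto
  finally show ?thesis
    using of_real_eq_iff by blast
qed

lemma sum_norm_mat_char_sums_le:
  assumes EE: "\<E> \<subseteq> mat_set R n" and FF: "\<F> \<subseteq> mat_set R n"
  shows "(\<Sum>Z\<in>mat_set R n. cmod (\<Sum>E\<in>\<E>. mat_char n Z E) * cmod (\<Sum>F\<in>\<F>. mat_char n Z F))
    \<le> real (card (mat_set R n)) * sqrt (real (card \<E>) * real (card \<F>))"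
proof -
  let ?M = "mat_set R n"
  have parseval: "(\<Sum>Z\<in>?M. (cmod (\<Sum>E\<in>S. mat_char n Z E))\<^sup>2) = real (card ?M) * real (card S)"
    if "S \<subseteq> ?M" for S
  proof -
    have "finite S"
      using finite_subset[OF that finite_mat_set[OF finite_carrier]] .
    moreover have "{(s, t) \<in> S \<times> S. s = t} = (\<lambda>s. (s, s)) ` S"
      by auto
    ultimately show ?thesis
      using that sum_norm_mat_char_sum_sq[of S id] by (simp add: card_image inj_on_def)
  qed
  have "(\<Sum>Z\<in>?M. cmod (\<Sum>E\<in>\<E>. mat_char n Z E) * cmod (\<Sum>F\<in>\<F>. mat_char n Z F))
      \<le> sqrt ((\<Sum>Z\<in>?M. (cmod (\<Sum>E\<in>\<E>. mat_char n Z E))\<^sup>2) * (\<Sum>Z\<in>?M. (cmod (\<Sum>F\<in>\<F>. mat_char n Z F))\<^sup>2))"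
    by (intro real_le_rsqrt Cauchy_Schwarz_sum)
  also have "\<dots> = real (card ?M) * sqrt (real (card \<E>) * real (card \<F>))"
    by (simp add: parseval EE FF real_sqrt_mult)
  finally show ?thesis .
qed

lemma norm_bilinear_mat_char_sum_sq_le:
  assumes Z: "Z \<in> mat_set R n" "Z \<noteq> mat_zero R n"
    and A: "A \<subseteq> mat_set R n" and B: "B \<subseteq> mat_set R n"
  shows "(cmod (\<Sum>a\<in>A. \<Sum>b\<in>B. mat_char n Z (mat_mult R n a b)))\<^sup>2
    \<le> real (card A) * real (card B) * real (card (mat_set R n)) * real (card (carrier R)) ^ (n * n - n)"
proof -
  let ?W = "\<lambda>b. mat_mult R n Z (mat_transpose n b)"
  let ?M = "mat_set R n"
  define v where "v a = (\<Sum>b\<in>B. mat_char n a (?W b))" for a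
  have "finite B"
    using B finite_subset finite_mat_set[OF finite_carrier] by blast
  have W_closed: "?W ` B \<subseteq> ?M"
    using B Z(1) by (auto intro!: mat_mult_closed mat_transpose_closed)
  have "card {(b, b') \<in> B \<times> B. ?W b = ?W b'} \<le> card B * card (carrier R) ^ (n * n - n)"
    using finite_carrier Z B by (rule card_mat_mult_transpose_pairs_le)
  then have pairs: "real (card {(b, b') \<in> B \<times> B. ?W b = ?W b'})
      \<le> real (card B) * real (card (carrier R)) ^ (n * n - n)"
    by (simp only: of_nat_mult[symmetric] of_nat_power[symmetric] of_nat_le_iff)
  have "(\<Sum>a\<in>A. \<Sum>b\<in>B. mat_char n Z (mat_mult R n a b)) = (\<Sum>a\<in>A. v a)"
    unfolding v_def using A B Z(1) by (intro sum.cong refl mat_char_mult) auto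
  then have "(cmod (\<Sum>a\<in>A. \<Sum>b\<in>B. mat_char n Z (mat_mult R n a b)))\<^sup>2 \<le> (\<Sum>a\<in>A. cmod (v a))\<^sup>2"
    by (simp only:) (intro power_mono norm_sum norm_ge_zero)
  also have "\<dots> \<le> real (card A) * (\<Sum>a\<in>A. (cmod (v a))\<^sup>2)"
    by (rule sum_squared_le_card_times_sum_squares)
  also have "\<dots> \<le> real (card A) * (\<Sum>a\<in>?M. (cmod (v a))\<^sup>2)"
    using A finite_mat_set[OF finite_carrier] by (intro mult_left_mono sum_mono2) auto
  also have "\<dots> = real (card A) * (real (card ?M) * real (card {(b, b') \<in> B \<times> B. ?W b = ?W b'}))"
    unfolding v_def using \<open>finite B\<close> W_closed by (simp add: sum_norm_mat_char_sum_sq)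
  also have "\<dots> \<le> real (card A) * (real (card ?M) * (real (card B) * real (card (carrier R)) ^ (n * n - n)))"
    using pairs by (intro mult_left_mono) simp_all
  finally show ?thesis
    by (simp only: mult.assoc mult.left_commute[of "real (card ?M)" "real (card B)"])
qed

lemma norm_mat_char_product_le:
  assumes Z: "Z \<in> mat_set R n" "Z \<noteq> mat_zero R n"
    and As: "\<And>l. l < d \<Longrightarrow> As l \<subseteq> mat_set R n" and Bs: "\<And>l. l < d \<Longrightarrow> Bs l \<subseteq> mat_set R n"
  defines "C \<equiv> real (card (mat_set R n)) * real (card (carrier R)) ^ (n * n - n)"
  shows "cmod (\<Prod>l<d. \<Sum>a\<in>As l. \<Sum>b\<in>Bs l. mat_char n Z (mat_mult R n a b))
    \<le> sqrt (\<Prod>l<d. real (card (As l)) * real (card (Bs l))) * sqrt C ^ d"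
proof -
  have "(cmod (\<Prod>l<d. \<Sum>a\<in>As l. \<Sum>b\<in>Bs l. mat_char n Z (mat_mult R n a b)))\<^sup>2
      = (\<Prod>l<d. (cmod (\<Sum>a\<in>As l. \<Sum>b\<in>Bs l. mat_char n Z (mat_mult R n a b)))\<^sup>2)"
    by (simp add: prod_norm[symmetric] prod_power_distrib)
  also have "\<dots> \<le> (\<Prod>l<d. real (card (As l)) * real (card (Bs l)) * C)"
    unfolding C_def using norm_bilinear_mat_char_sum_sq_le[OF Z As Bs]
    by (intro prod_mono) (simp add: mult.assoc)
  also have "\<dots> = (\<Prod>l<d. real (card (As l)) * real (card (Bs l))) * C ^ d"
    by (simp add: prod.distrib)
  finally have "cmod (\<Prod>l<d. \<Sum>a\<in>As l. \<Sum>b\<in>Bs l. mat_char n Z (mat_mult R n a b))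
      \<le> sqrt ((\<Prod>l<d. real (card (As l)) * real (card (Bs l))) * C ^ d)"
    by (rule real_le_rsqrt)
  then show ?thesis
    by (simp add: real_sqrt_mult real_sqrt_power)
qed

lemma mat_char_indicator:
  assumes "Y1 \<in> mat_set R n" and "Y2 \<in> mat_set R n"
  shows "(if Y1 = Y2 then 1 else 0)
    = (\<Sum>Z\<in>mat_set R n. mat_char n Z Y1 * cnj (mat_char n Z Y2)) / of_nat (card (mat_set R n))"
proof -
  have "0 < card (mat_set R n)"
    unfolding card_gt_0_iff using mat_zero_closed finite_mat_set[OF finite_carrier] by blast
  then show ?thesis
    using sum_mat_char_orthogonal[OF assms] by simp
qed

lemma card_mat_bilinear_solutions_eq:
  assumes As: "\<And>l. l < d \<Longrightarrow> As l \<subseteq> mat_set R n" and Bs: "\<And>l. l < d \<Longrightarrow> Bs l \<subseteq> mat_set R n"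
    and EE: "\<E> \<subseteq> mat_set R n" and FF: "\<F> \<subseteq> mat_set R n"
  shows "of_nat (card (mat_bilinear_solutions R n d As Bs \<E> \<F>)) = (\<Sum>Z\<in>mat_set R n.
      (\<Prod>l<d. \<Sum>a\<in>As l. \<Sum>b\<in>Bs l. mat_char n Z (mat_mult R n a b))
      * cnj (\<Sum>E\<in>\<E>. mat_char n Z E) * cnj (\<Sum>F\<in>\<F>. mat_char n Z F)) / of_nat (card (mat_set R n))"
proof -
  let ?M = "mat_set R n"
  let ?PA = "\<Pi>\<^sub>E l\<in>{..<d}. As l" and ?PB = "\<Pi>\<^sub>E l\<in>{..<d}. Bs l"
  let ?S = "\<lambda>A B. mat_sum R n (\<lambda>l. mat_mult R n (A l) (B l)) d"
  let ?P = "\<lambda>Z A B. \<Prod>l<d. mat_char n Z (mat_mult R n (A l) (B l))"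
  have finite_factors: "finite (As l)" "finite (Bs l)" if "l < d" for l
    using finite_subset[OF As[OF that]] finite_subset[OF Bs[OF that]] finite_mat_set[OF finite_carrier]
    by blast+
  have finite_EF: "finite \<E>" "finite \<F>"
    using finite_subset[OF EE] finite_subset[OF FF] finite_mat_set[OF finite_carrier] by blast+
  have "of_nat (card (mat_bilinear_solutions R n d As Bs \<E> \<F>))
      = (\<Sum>A\<in>?PA. \<Sum>B\<in>?PB. \<Sum>E\<in>\<E>. \<Sum>F\<in>\<F>. if ?S A B = mat_add R n E F then 1 else (0::complex))"
    using finite_factors finite_EF by (rule of_nat_card_mat_bilinear_solutions)
  also have "\<dots> = (\<Sum>A\<in>?PA. \<Sum>B\<in>?PB. \<Sum>E\<in>\<E>. \<Sum>F\<in>\<F>.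
      (\<Sum>Z\<in>?M. ?P Z A B * cnj (mat_char n Z E) * cnj (mat_char n Z F)) / of_nat (card ?M))"
  proof (intro sum.cong refl)
    fix A B E F assume A: "A \<in> ?PA" and B: "B \<in> ?PB" and "E \<in> \<E>" "F \<in> \<F>"
    have AB: "mat_mult R n (A l) (B l) \<in> ?M" if "l < d" for l
      using As Bs that PiE_mem[OF A, of l] PiE_mem[OF B, of l] by (auto intro!: mat_mult_closed)
    have EF: "E \<in> ?M" "F \<in> ?M"
      using EE FF \<open>E \<in> \<E>\<close> \<open>F \<in> \<F>\<close> by auto
    show "(if ?S A B = mat_add R n E F then 1 else 0)
        = (\<Sum>Z\<in>?M. ?P Z A B * cnj (mat_char n Z E) * cnj (mat_char n Z F)) / of_nat (card ?M)"
      using AB EF mat_char_indicator[OF mat_sum_closed[OF AB] mat_add_closed[OF EF]]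
      by (simp add: mat_char_sum mat_char_add mult.assoc)
  qed
  also have "\<dots> = (\<Sum>Z\<in>?M. \<Sum>A\<in>?PA. \<Sum>B\<in>?PB. \<Sum>E\<in>\<E>. \<Sum>F\<in>\<F>.
      ?P Z A B * cnj (mat_char n Z E) * cnj (mat_char n Z F)) / of_nat (card ?M)"
    by (simp only: sum_divide_distrib sum.swap[of _ _ ?M])
  also have "\<dots> = (\<Sum>Z\<in>?M. (\<Prod>l<d. \<Sum>a\<in>As l. \<Sum>b\<in>Bs l. mat_char n Z (mat_mult R n a b))
      * cnj (\<Sum>E\<in>\<E>. mat_char n Z E) * cnj (\<Sum>F\<in>\<F>. mat_char n Z F)) / of_nat (card ?M)"
    using prod_double_sum_PiE[of d As Bs "\<lambda>l a b. mat_char n _ (mat_mult R n a b)"] finite_factors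
    by (simp only: nested_sum_mult_factor cnj_sum)
  finally show ?thesis .
qed

lemma card_mat_bilinear_solutions_error_eq:
  assumes As: "\<And>l. l < d \<Longrightarrow> As l \<subseteq> mat_set R n" and Bs: "\<And>l. l < d \<Longrightarrow> Bs l \<subseteq> mat_set R n"
    and EE: "\<E> \<subseteq> mat_set R n" and FF: "\<F> \<subseteq> mat_set R n"
  defines "q \<equiv> real (card (carrier R))"
    and "P \<equiv> real (card \<E>) * real (card \<F>) * (\<Prod>l<d. real (card (As l)) * real (card (Bs l)))"
  shows "complex_of_real (real (card (mat_bilinear_solutions R n d As Bs \<E> \<F>)) - P / q ^ (n * n))
    = (\<Sum>Z\<in>mat_set R n - {mat_zero R n}. (\<Prod>l<d. \<Sum>a\<in>As l. \<Sum>b\<in>Bs l. mat_char n Z (mat_mult R n a b))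
        * cnj (\<Sum>E\<in>\<E>. mat_char n Z E) * cnj (\<Sum>F\<in>\<F>. mat_char n Z F)) / complex_of_real (q ^ (n * n))"
proof -
  let ?M = "mat_set R n"
  let ?G = "\<lambda>Z. (\<Prod>l<d. \<Sum>a\<in>As l. \<Sum>b\<in>Bs l. mat_char n Z (mat_mult R n a b))
    * cnj (\<Sum>E\<in>\<E>. mat_char n Z E) * cnj (\<Sum>F\<in>\<F>. mat_char n Z F)"
  have "(\<Prod>l<d. \<Sum>a\<in>As l. \<Sum>b\<in>Bs l. mat_char n (mat_zero R n) (mat_mult R n a b))
      = (\<Prod>l<d. of_nat (card (As l)) * of_nat (card (Bs l)))"
    using As Bs by (intro prod.cong refl) (simp add: mat_char_zero_left mat_mult_closed subset_iff)
  then have "?G (mat_zero R n) = complex_of_real P"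
    using EE FF by (simp add: P_def mat_char_zero_left subset_iff)
  then have "(\<Sum>Z\<in>?M. ?G Z) = complex_of_real P + (\<Sum>Z\<in>?M - {mat_zero R n}. ?G Z)"
    using sum.remove[OF finite_mat_set[OF finite_carrier] mat_zero_closed, of ?G] by simp
  moreover have "complex_of_nat (card ?M) = complex_of_real (q ^ (n * n))"
    by (simp add: q_def card_mat_set)
  ultimately show ?thesis
    using card_mat_bilinear_solutions_eq[OF As Bs EE FF] by (simp add: add_divide_distrib)
qed

lemma card_mat_bilinear_solutions_deviation:
  assumes As: "\<And>l. l < d \<Longrightarrow> As l \<subseteq> mat_set R n" and Bs: "\<And>l. l < d \<Longrightarrow> Bs l \<subseteq> mat_set R n"
    and EE: "\<E> \<subseteq> mat_set R n" and FF: "\<F> \<subseteq> mat_set R n"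
  defines "q \<equiv> real (card (carrier R))"
    and "P \<equiv> real (card \<E>) * real (card \<F>) * (\<Prod>l<d. real (card (As l)) * real (card (Bs l)))"
  shows "\<bar>real (card (mat_bilinear_solutions R n d As Bs \<E> \<F>)) - P / q ^ (n * n)\<bar>
    \<le> sqrt (q ^ (n * n) * q ^ (n * n - n)) ^ d * sqrt P"
proof -
  let ?M = "mat_set R n" and ?Z = "mat_set R n - {mat_zero R n}"
  let ?S = "\<lambda>Z. \<Prod>l<d. \<Sum>a\<in>As l. \<Sum>b\<in>Bs l. mat_char n Z (mat_mult R n a b)"
  let ?E = "\<lambda>Z. \<Sum>E\<in>\<E>. mat_char n Z E" and ?F = "\<lambda>Z. \<Sum>F\<in>\<F>. mat_char n Z F"
  let ?K = "sqrt (\<Prod>l<d. real (card (As l)) * real (card (Bs l))) * sqrt (q ^ (n * n) * q ^ (n * n - n)) ^ d"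
  have K_nonneg: "0 \<le> ?K"
    by (intro mult_nonneg_nonneg zero_le_power real_sqrt_ge_zero prod_nonneg) (auto simp: q_def)
  have q_pos: "0 < q"
    using finite_carrier zero_closed by (auto simp: q_def card_gt_0_iff)
  then have Q_pos: "0 < q ^ (n * n)"
    by simp
  have "complex_of_real (real (card (mat_bilinear_solutions R n d As Bs \<E> \<F>)) - P / q ^ (n * n))
      = (\<Sum>Z\<in>?Z. ?S Z * cnj (?E Z) * cnj (?F Z)) / complex_of_real (q ^ (n * n))"
    unfolding q_def P_def using As Bs EE FF by (rule card_mat_bilinear_solutions_error_eq)
  then have "\<bar>real (card (mat_bilinear_solutions R n d As Bs \<E> \<F>)) - P / q ^ (n * n)\<bar>
      = cmod ((\<Sum>Z\<in>?Z. ?S Z * cnj (?E Z) * cnj (?F Z)) / complex_of_real (q ^ (n * n)))"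
    by (metis norm_of_real[where 'a=complex])
  also have "\<dots> = cmod (\<Sum>Z\<in>?Z. ?S Z * cnj (?E Z) * cnj (?F Z)) / q ^ (n * n)"
    using Q_pos by (simp add: norm_divide norm_power q_def)
  also have "\<dots> \<le> (\<Sum>Z\<in>?Z. cmod (?S Z * cnj (?E Z) * cnj (?F Z))) / q ^ (n * n)"
    using Q_pos by (intro divide_right_mono norm_sum) simp
  also have "\<dots> \<le> (\<Sum>Z\<in>?Z. ?K * (cmod (?E Z) * cmod (?F Z))) / q ^ (n * n)"
  proof (intro divide_right_mono sum_mono)
    fix Z assume "Z \<in> ?Z"
    then have "cmod (?S Z) \<le> ?K"
      using norm_mat_char_product_le[OF _ _ As Bs, of Z] by (simp add: q_def card_mat_set)
    then have "cmod (?S Z) * (cmod (?E Z) * cmod (?F Z)) \<le> ?K * (cmod (?E Z) * cmod (?F Z))"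
      by (rule mult_right_mono) simp
    then show "cmod (?S Z * cnj (?E Z) * cnj (?F Z)) \<le> ?K * (cmod (?E Z) * cmod (?F Z))"
      unfolding norm_mult complex_mod_cnj by (simp only: mult.assoc)
  qed (use Q_pos in simp)
  also have "\<dots> \<le> (\<Sum>Z\<in>?M. ?K * (cmod (?E Z) * cmod (?F Z))) / q ^ (n * n)"
    using finite_mat_set[OF finite_carrier] Q_pos
    by (intro divide_right_mono sum_mono2) (auto intro!: mult_nonneg_nonneg[OF K_nonneg])
  also have "\<dots> = ?K * (\<Sum>Z\<in>?M. cmod (?E Z) * cmod (?F Z)) / q ^ (n * n)"
    by (simp only: sum_distrib_left)
  also have "\<dots> \<le> ?K * (q ^ (n * n) * sqrt (real (card \<E>) * real (card \<F>))) / q ^ (n * n)"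
    using sum_norm_mat_char_sums_le[OF EE FF] Q_pos K_nonneg
    by (intro divide_right_mono mult_left_mono) (auto simp: q_def card_mat_set)
  also have "\<dots> = sqrt (q ^ (n * n) * q ^ (n * n - n)) ^ d * sqrt P"
    using q_pos by (simp add: P_def real_sqrt_mult)
  finally show ?thesis .
qed

end

theorem theorem1p2:
  fixes d n :: nat
  assumes "d \<ge> 1" and "n \<ge> 2"
  shows "\<exists>C::real. C > 0 \<and>
    (\<forall>(R :: 'a ring) (As :: nat \<Rightarrow> 'a mat set) (Bs :: nat \<Rightarrow> 'a mat set) (\<E> :: 'a mat set) (\<F> :: 'a mat set).
       field R \<and> finite (carrier R) \<and> odd (card (carrier R)) \<and>
       (\<forall>i<d. As i \<subseteq> mat_set R n \<and> Bs i \<subseteq> mat_set R n) \<and>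
       \<E> \<subseteq> mat_set R n \<and> \<F> \<subseteq> mat_set R n \<longrightarrow>
       (let q = real (card (carrier R));
            P = real (card \<E>) * real (card \<F>) * (\<Prod>i<d. real (card (As i)) * real (card (Bs i)));
            N = real (card {(A, B, E, F).
                   A \<in> (\<Pi>\<^sub>E i\<in>{..<d}. As i) \<and> B \<in> (\<Pi>\<^sub>E i\<in>{..<d}. Bs i) \<and>
                   E \<in> \<E> \<and> F \<in> \<F> \<and>
                   mat_sum R n (\<lambda>i. mat_mult R n (A i) (B i)) d = mat_add R n E F})
        in \<bar>N - P / q ^ (n\<^sup>2)\<bar>
             \<le> C * q powr (real d * real n ^ 2 - (real d - 1) * real n / 2 - 1 / 2) * sqrt P))"
  apply (intro exI[of _ 1] conjI allI impI)
   apply simp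
  subgoal for R As Bs \<E> \<F>
  proof -
    assume hyps: "field R \<and> finite (carrier R) \<and> odd (card (carrier R)) \<and>
      (\<forall>i<d. As i \<subseteq> mat_set R n \<and> Bs i \<subseteq> mat_set R n) \<and> \<E> \<subseteq> mat_set R n \<and> \<F> \<subseteq> mat_set R n"
    then interpret field R
      by blast
    have fin: "finite (carrier R)"
      using hyps by blast
    obtain \<psi> g where "additive_character R \<psi>" "g \<in> carrier R" "\<psi> g \<noteq> 1"
      using nontrivial_additive_character_exists[OF fin] one_closed one_not_zero by blast
    then interpret finite_field_character R \<psi>
      using fin by unfold_locales blast+
    let ?q = "real (card (carrier R))"
    let ?P = "real (card \<E>) * real (card \<F>) * (\<Prod>l<d. real (card (As l)) * real (card (Bs l)))"
    have "\<bar>real (card (mat_bilinear_solutions R n d As Bs \<E> \<F>)) - ?P / ?q ^ (n * n)\<bar>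
        \<le> sqrt (?q ^ (n * n) * ?q ^ (n * n - n)) ^ d * sqrt ?P"
      using hyps by (intro card_mat_bilinear_solutions_deviation) auto
    also have "\<dots> \<le> ?q powr (real d * real n ^ 2 - (real d - 1) * real n / 2 - 1 / 2) * sqrt ?P"
      using fin assms(2)
      by (intro mult_right_mono sqrt_power_le_powr) (auto simp: Suc_le_eq card_gt_0_iff intro!: mult_nonneg_nonneg prod_nonneg)
    finally show ?thesis
      by (simp add: Let_def mat_bilinear_solutions_def power2_eq_square)
  qed
  done

end
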